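(* Assume (T1)–(T5). Let $\mu_0^*\in\mathbb P(S)$ be arbitrary and define recursively $$\mu^*_{k+1}(B):=\int_S\int_A\mathbb P\big(T(x,a,\mu^*_k,Z)\in B\big)\,\bar Q^*(da|x)\,\mu^*_k(dx),\quad B\subset S\text{ Borel}.$$ Then $W(\mu^*_{k+1},\mu^* )\le\gamma\,W(\mu^*_k,\mu^* )$ for all $k\ge0$, and consequently $\mu_k^*\Rightarrow\mu^*$ weakly as $k\to\infty$.
   Context: $S\subset\mathbb R^k$ and $A\subset\mathbb R^m$ are compact, with Euclidean norms $|\cdot|$; every action in $A$ is admissible in every state ($D(x)=A$ for all $x$). $Z$ is a random variable with law $\mathbb P^Z$ on a Borel set $\mathcal Z$ and $T:S\times A\times\mathbb P(S)\times\mathcal Z\to S$ is measurable (no common noise). $W$ denotes the Wasserstein distance $W(\mu,\nu):=\sup\{|\int f\,d\nu-\int f\,d\mu|: |f(x)-f(y)|\le|x-y|\ \forall x,y\}$ (on $\mathbb P(S)$ or $\mathbb P(A)$). $\mu^*\in\mathbb P(S)$ and $\bar Q^*$ is a stochastic kernel from $S$ to $A$ such that $\mu^*$ is a stationary distribution of the kernel $P^{\bar Q^*}(B|x):=\int_A\mathbb P(T(x,a,\mu^*,Z)\in B)\bar Q^*(da|x)$, i.e. $\mu^*(B)=\int_S P^{\bar Q^*}(B|x)\mu^*(dx)$. (T1) There is $\gamma_W>0$ with $\sup_{x,a,z}|T(x,a,\mu,z)-T(x,a,\mu^*,z)|\le\gamma_W W(\mu,\mu^* )$ for all $\mu\in\mathbb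 P(S)$. (T2) $W(\bar Q^*(\cdot|x),\bar Q^*(\cdot|x'))\le\gamma_Q|x-x'|$ for all $x,x'\in S$. (T3) There is $\gamma_A>0$ with $\sup_{x,z}|T(x,a,\mu^*,z)-T(x,a',\mu^*,z)|\le\gamma_A|a-a'|$ for all $a,a'\in A$. (T4) There is $\gamma_S>0$ with $\sup_{a,z}|T(x,a,\mu^*,z)-T(x',a,\mu^*,z)|\le\gamma_S|x-x'|$ for all $x,x'\in S$. (T5) $\gamma:=\gamma_W+\gamma_Q\gamma_A+\gamma_S<1$. *)

theory Defs
  imports "HOL-Probability.Probability"
begin

text \<open>Probability measures on the Borel sets of the ambient space that are
concentrated on the set S (i.e. elements of P(S)).\<close>
definition prob_on :: "'a::topological_space set \<Rightarrow> 'a measure \<Rightarrow> bool" where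
  "prob_on S M \<longleftrightarrow> prob_space M \<and> sets M = sets borel \<and> emeasure M S = 1"

definition lip1 :: "('a::metric_space \<Rightarrow> real) set" where
  "lip1 = {f. \<forall>x y. \<bar>f x - f y\<bar> \<le> dist x y}"

definition wdist :: "'a::metric_space measure \<Rightarrow> 'a measure \<Rightarrow> real" where
  "wdist M N = (SUP f \<in> lip1. \<bar>(\<integral>x. f x \<partial>N) - (\<integral>x. f x \<partial>M)\<bar>)"

definition weak_conv_to :: "(nat \<Rightarrow> 'a::topological_space measure) \<Rightarrow> 'a measure \<Rightarrow> bool" where
  "weak_conv_to Ms M \<longleftrightarrow>
     (\<forall>f::'a \<Rightarrow> real. continuous_on UNIV f \<and> bounded (range f) \<longrightarrow>
        (\<lambda>k. \<integral>x. f x \<partial>Ms k) \<longlonglongrightarrow> (\<integral>x. f x \<partial>M))"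

end

theory Submission
  imports Defs
begin

(*
  For a test function f, integrating f against the law after one step from \<nu> amounts to
  integrating G \<nu> x = \<integral>\<integral> f (T x a \<nu> z) dPZ Q(da|x) against \<nu>, and stationarity gives
  \<integral> f d\<mu>s = \<integral> G \<mu>s d\<mu>s. Compare the two through \<integral> G \<mu>s d\<nu>: by (T1) the functions G \<nu> and
  G \<mu>s differ uniformly by at most \<gamma>W W(\<nu>, \<mu>s), and by (T2)-(T4) G \<mu>s is
  (\<gamma>Q \<gamma>A + \<gamma>S)-Lipschitz on S, so after extending it off S (McShane) its integrals against \<nu>
  and \<mu>s differ by at most that constant times W(\<nu>, \<mu>s). Hence W contracts by \<gamma>. Geometric
  decay of W gives weak convergence, because on the compact S every continuous function is a
  uniform limit of Lipschitz functions (inf-convolutions).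
*)

lemma lip1_iff_lipschitz_on: "f \<in> lip1 \<longleftrightarrow> 1-lipschitz_on UNIV f"
  by (simp add: lip1_def lipschitz_on_def dist_real_def)

lemma lipschitz_on_UNIV_borel_measurable:
  fixes g :: "'x::metric_space \<Rightarrow> real"
  shows "L-lipschitz_on UNIV g \<Longrightarrow> g \<in> borel_measurable borel"
  by (intro borel_measurable_continuous_onI lipschitz_on_continuous_on)

lemma lip1_borel_measurable: "f \<in> lip1 \<Longrightarrow> f \<in> borel_measurable borel"
  using lipschitz_on_UNIV_borel_measurable by (auto simp: lip1_iff_lipschitz_on)

lemma compact_lipschitz_on_bounded_image:
  fixes g :: "'x::metric_space \<Rightarrow> 'y::metric_space"
  assumes "compact S" "L-lipschitz_on S g"
  shows "bounded (g ` S)"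
  using assms by (intro compact_imp_bounded compact_continuous_image lipschitz_on_continuous_on)

lemma bounded_image_if_abs_le:
  fixes g :: "'x \<Rightarrow> real"
  shows "(\<And>x. \<bar>g x\<bar> \<le> c) \<Longrightarrow> bounded (g ` S)"
  by (auto simp: bounded_iff)

lemma prob_onD:
  fixes S :: "'x::metric_space set"
  assumes "prob_on S M" "compact S"
  shows "prob_space M" "sets M = sets borel" "AE x in M. x \<in> S" "S \<noteq> {}"
proof -
  show "prob_space M" and sets: "sets M = sets borel" using assms(1) by (auto simp: prob_on_def)
  then interpret prob_space M by simp
  have "S \<in> sets M" using sets assms(2) by (auto intro: borel_closed compact_imp_closed)
  then show "AE x in M. x \<in> S"
    using assms(1) AE_in_set_eq_1 by (simp add: prob_on_def emeasure_eq_measure)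
  show "S \<noteq> {}" using assms(1) by (auto simp: prob_on_def)
qed

lemma prob_on_space_nonempty: "prob_on S M \<Longrightarrow> space M \<noteq> {}"
  by (simp add: prob_on_def prob_space.not_empty)

lemma prob_on_borel_measurable:
  assumes "prob_on S M" "g \<in> borel_measurable borel"
  shows "g \<in> borel_measurable M"
  using assms measurable_cong_sets[of M borel] by (auto simp: prob_on_def)

lemma prob_on_integrable:
  fixes S :: "'x::metric_space set" and g :: "'x \<Rightarrow> real"
  assumes "compact S" "prob_on S M" "g \<in> borel_measurable borel" "bounded (g ` S)"
  shows "integrable M g"
proof -
  interpret prob_space M using prob_onD[OF assms(2,1)] by simp
  obtain B where "\<forall>x\<in>S. \<bar>g x\<bar> \<le> B" using assms(4) by (auto simp: bounded_iff)
  with prob_onD(3)[OF assms(2,1)] have "AE x in M. norm (g x) \<le> B" by auto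
  then show ?thesis using prob_on_borel_measurable[OF assms(2,3)] by (rule integrable_const_bound)
qed

lemma prob_on_integral_cong:
  fixes S :: "'x::metric_space set" and f g :: "'x \<Rightarrow> real"
  assumes "compact S" "prob_on S M" "f \<in> borel_measurable borel" "g \<in> borel_measurable borel"
    and "\<And>x. x \<in> S \<Longrightarrow> f x = g x"
  shows "integral\<^sup>L M f = integral\<^sup>L M g"
  using prob_onD(3)[OF assms(2,1)] assms(5)
  by (intro integral_cong_AE prob_on_borel_measurable[OF assms(2)] assms(3,4)) auto

lemma prob_space_abs_integral_diff_le:
  fixes f g :: "_ \<Rightarrow> real"
  assumes "prob_space M" "integrable M f" "integrable M g" "AE x in M. \<bar>f x - g x\<bar> \<le> C"
  shows "\<bar>integral\<^sup>L M f - integral\<^sup>L M g\<bar> \<le> C"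
proof -
  interpret prob_space M by fact
  have "\<bar>integral\<^sup>L M f - integral\<^sup>L M g\<bar> = \<bar>\<integral>x. f x - g x \<partial>M\<bar>"
    using assms(2,3) by simp
  also have "\<dots> \<le> (\<integral>x. \<bar>f x - g x\<bar> \<partial>M)" by (rule integral_abs_bound)
  also have "\<dots> \<le> (\<integral>x. C \<partial>M)" using assms by (intro integral_mono_AE) auto
  finally show ?thesis by (simp add: prob_space)
qed

lemma prob_space_abs_integral_le:
  fixes f :: "_ \<Rightarrow> real"
  assumes "prob_space M" "f \<in> borel_measurable M" "AE x in M. \<bar>f x\<bar> \<le> C"
  shows "\<bar>integral\<^sup>L M f\<bar> \<le> C"
proof -
  have "integrable M f"
    using assms
    by (intro finite_measure.integrable_const_bound[where B=C]) (auto simp: prob_space_def)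
  then show ?thesis
    using prob_space_abs_integral_diff_le[OF assms(1), of f "\<lambda>_. 0"] assms(3) by simp
qed

lemma prob_on_abs_integral_diff_le:
  fixes S :: "'x::metric_space set" and f g :: "'x \<Rightarrow> real"
  assumes "compact S" "prob_on S M"
    and "f \<in> borel_measurable borel" "bounded (f ` S)"
    and "g \<in> borel_measurable borel" "bounded (g ` S)"
    and "\<And>x. x \<in> S \<Longrightarrow> \<bar>f x - g x\<bar> \<le> C"
  shows "\<bar>integral\<^sup>L M f - integral\<^sup>L M g\<bar> \<le> C"
  using prob_onD(3)[OF assms(2,1)] assms
  by (intro prob_space_abs_integral_diff_le prob_onD(1)[OF assms(2,1)] prob_on_integrable) auto

text \<open>The inf-convolution of g restricted to S with L \<cdot> dist; for g L-Lipschitz on S this is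
  McShane's extension of g.\<close>
definition lipschitz_envelope :: "real \<Rightarrow> 'x::metric_space set \<Rightarrow> ('x \<Rightarrow> real) \<Rightarrow> 'x \<Rightarrow> real" where
  "lipschitz_envelope L S g x = Inf ((\<lambda>y. g y + L * dist x y) ` S)"

lemma bdd_below_lipschitz_envelope_image:
  assumes "0 \<le> L" "bdd_below (g ` S)"
  shows "bdd_below ((\<lambda>y. g y + L * dist x y) ` S)"
proof -
  obtain m where "\<And>y. y \<in> S \<Longrightarrow> m \<le> g y" using assms(2) by (auto simp: bdd_below_def)
  then show ?thesis using assms(1) by (intro bdd_belowI2[of _ m]) (simp add: add_increasing2)
qed

lemma lipschitz_envelope_le:
  assumes "0 \<le> L" "bdd_below (g ` S)" "x \<in> S"
  shows "lipschitz_envelope L S g x \<le> g x"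
  unfolding lipschitz_envelope_def
  using cInf_lower[OF imageI[OF assms(3)] bdd_below_lipschitz_envelope_image[OF assms(1,2), of x]]
  by simp

lemma lipschitz_envelope_ge:
  assumes "S \<noteq> {}" "\<And>y. y \<in> S \<Longrightarrow> c \<le> g y + L * dist x y"
  shows "c \<le> lipschitz_envelope L S g x"
  unfolding lipschitz_envelope_def using assms by (intro cInf_greatest) auto

lemma lipschitz_on_lipschitz_envelope:
  assumes "S \<noteq> {}" "0 \<le> L" "bdd_below (g ` S)"
  shows "L-lipschitz_on UNIV (lipschitz_envelope L S g)"
proof (rule lipschitz_onI)
  have shift: "lipschitz_envelope L S g x - L * dist x x' \<le> lipschitz_envelope L S g x'" for x x'
  proof (rule lipschitz_envelope_ge[OF assms(1)])
    fix y assume y: "y \<in> S"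
    have "lipschitz_envelope L S g x \<le> g y + L * dist x y"
      unfolding lipschitz_envelope_def
      by (rule cInf_lower[OF imageI[OF y] bdd_below_lipschitz_envelope_image[OF assms(2,3)]])
    also have "\<dots> \<le> g y + L * dist x' y + L * dist x x'"
      using mult_left_mono[OF dist_triangle[of x y x'] assms(2)]
      by (simp add: dist_commute algebra_simps)
    finally show "lipschitz_envelope L S g x - L * dist x x' \<le> g y + L * dist x' y" by simp
  qed
  show "dist (lipschitz_envelope L S g x) (lipschitz_envelope L S g y) \<le> L * dist x y" for x y
    using shift[of x y] shift[of y x] unfolding dist_real_def abs_le_iff by (simp add: dist_commute)
qed (fact assms(2))

lemma lipschitz_envelope_eq:
  assumes "L-lipschitz_on S g" "bdd_below (g ` S)" "x \<in> S"
  shows "lipschitz_envelope L S g x = g x"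
proof (rule antisym)
  show "lipschitz_envelope L S g x \<le> g x"
    using assms lipschitz_on_nonneg by (intro lipschitz_envelope_le) auto
  show "g x \<le> lipschitz_envelope L S g x"
  proof (rule lipschitz_envelope_ge)
    show "S \<noteq> {}" using assms(3) by auto
    fix y assume "y \<in> S"
    from lipschitz_onD[OF assms(1,3) this] show "g x \<le> g y + L * dist x y"
      by (simp add: dist_real_def abs_le_iff)
  qed
qed

lemma compact_continuous_on_lipschitz_approx:
  fixes f :: "'x::metric_space \<Rightarrow> real"
  assumes S: "compact S" "S \<noteq> {}" and f: "continuous_on S f" and e: "0 < e"
  obtains L g where "0 < L" "L-lipschitz_on UNIV g" "\<And>x. x \<in> S \<Longrightarrow> \<bar>f x - g x\<bar> \<le> e"
proof -
  obtain B where B: "\<And>x. x \<in> S \<Longrightarrow> \<bar>f x\<bar> \<le> B"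
    using compact_imp_bounded[OF compact_continuous_image[OF f S(1)]] by (auto simp: bounded_iff)
  have "uniformly_continuous_on S f" by (rule compact_uniformly_continuous[OF f S(1)])
  then obtain \<delta> where \<delta>: "0 < \<delta>" and close: "\<And>x y. x \<in> S \<Longrightarrow> y \<in> S \<Longrightarrow> dist y x < \<delta> \<Longrightarrow> \<bar>f y - f x\<bar> < e"
    unfolding uniformly_continuous_on_def dist_real_def using e by metis
  obtain x0 where "x0 \<in> S" using S(2) by auto
  with B have B0: "0 \<le> B" by force
  define L where "L = 2 * B / \<delta> + 1"
  have L: "0 < L" "2 * B \<le> L * \<delta>"
    using B0 \<delta> by (auto simp: L_def add_nonneg_pos distrib_right)
  have "-B \<le> f x" if "x \<in> S" for x using abs_le_D2[OF B[OF that]] by linarith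
  then have bdd: "bdd_below (f ` S)" by (intro bdd_belowI2)
  define g where "g = lipschitz_envelope L S f"
  show ?thesis
  proof
    show "0 < L" "L-lipschitz_on UNIV g"
      unfolding g_def using L S(2) bdd by (auto intro: lipschitz_on_lipschitz_envelope)
    fix x assume x: "x \<in> S"
    have "f x - e \<le> g x" unfolding g_def
    proof (rule lipschitz_envelope_ge[OF S(2)])
      fix y assume y: "y \<in> S"
      show "f x - e \<le> f y + L * dist x y"
      proof (cases "dist y x < \<delta>")
        case True
        then show ?thesis using close[OF x y] L by (simp add: abs_less_iff add_increasing2)
      next
        case False
        then have "L * \<delta> \<le> L * dist x y" using L by (simp add: dist_commute)
        moreover have "f x - f y \<le> 2 * B" using B[OF x] B[OF y] by (simp add: abs_le_iff)
        ultimately show ?thesis using L e by linarith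
      qed
    qed
    moreover have "g x \<le> f x" unfolding g_def using L bdd x by (intro lipschitz_envelope_le) auto
    ultimately show "\<bar>f x - g x\<bar> \<le> e" using e by (simp add: abs_le_iff)
  qed
qed

lemma wdist_bdd_above:
  fixes S :: "'x::metric_space set"
  assumes S: "compact S" and M: "prob_on S M" and N: "prob_on S N"
  shows "bdd_above ((\<lambda>f. \<bar>(\<integral>x. f x \<partial>N) - (\<integral>x. f x \<partial>M)\<bar>) ` lip1)"
proof -
  obtain x0 where x0: "x0 \<in> S" using prob_onD(4)[OF M S] by auto
  obtain c where c: "\<And>y. y \<in> S \<Longrightarrow> dist x0 y \<le> c"
    using compact_imp_bounded[OF S] unfolding bounded_any_center[of S x0] by blast
  have near_x0: "\<bar>(\<integral>x. f x \<partial>P) - f x0\<bar> \<le> c" if f: "f \<in> lip1" and P: "prob_on S P" for f P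
  proof -
    have "bounded (f ` S)"
      using f lipschitz_on_subset[OF _ subset_UNIV]
      by (intro compact_lipschitz_on_bounded_image[OF S]) (auto simp: lip1_iff_lipschitz_on)
    moreover have "\<bar>f x - f x0\<bar> \<le> c" if "x \<in> S" for x
    proof -
      have "\<bar>f x - f x0\<bar> \<le> dist x x0" using f by (simp add: lip1_def)
      also have "\<dots> \<le> c" using c[OF that] by (simp add: dist_commute)
      finally show ?thesis .
    qed
    moreover note lip1_borel_measurable[OF f]
    ultimately have "\<bar>(\<integral>x. f x \<partial>P) - (\<integral>x. f x0 \<partial>P)\<bar> \<le> c"
      by (intro prob_on_abs_integral_diff_le[OF S P]) (auto simp: image_constant_conv)
    then show ?thesis using prob_onD(1)[OF P S] by (simp add: prob_space.prob_space)
  qed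
  show ?thesis
  proof (rule bdd_aboveI2)
    fix f :: "'x \<Rightarrow> real" assume "f \<in> lip1"
    from near_x0[OF this M] near_x0[OF this N]
    show "\<bar>(\<integral>x. f x \<partial>N) - (\<integral>x. f x \<partial>M)\<bar> \<le> 2 * c" by linarith
  qed
qed

lemma abs_integral_diff_le_wdist:
  fixes S :: "'x::metric_space set"
  assumes "compact S" "prob_on S M" "prob_on S N" "f \<in> lip1"
  shows "\<bar>(\<integral>x. f x \<partial>N) - (\<integral>x. f x \<partial>M)\<bar> \<le> wdist M N"
  unfolding wdist_def using assms by (intro cSUP_upper wdist_bdd_above)

lemma wdist_nonneg:
  fixes S :: "'x::metric_space set"
  assumes "compact S" "prob_on S M" "prob_on S N"
  shows "0 \<le> wdist M N"
  using abs_integral_diff_le_wdist[OF assms, of "\<lambda>_. 0"] by (simp add: lip1_def)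

lemma wdist_leI:
  fixes M N :: "'x::metric_space measure"
  assumes "\<And>f. f \<in> lip1 \<Longrightarrow> \<bar>(\<integral>x. f x \<partial>N) - (\<integral>x. f x \<partial>M)\<bar> \<le> D"
  shows "wdist M N \<le> D"
proof -
  have "(\<lambda>_. 0) \<in> lip1" by (simp add: lip1_def)
  then show ?thesis unfolding wdist_def using assms by (intro cSUP_least) auto
qed

lemma wdist_eq_0_if_subsingleton:
  fixes S :: "'x::metric_space set"
  assumes S: "compact S" "S \<subseteq> {x0}" and M: "prob_on S M" and N: "prob_on S N"
  shows "wdist M N = 0"
proof (rule antisym)
  have "integral\<^sup>L P f = integral\<^sup>L P (\<lambda>_. f x0)" if "prob_on S P" "f \<in> lip1" for P f
    using that S lip1_borel_measurable by (intro prob_on_integral_cong[OF S(1)]) auto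
  then show "wdist M N \<le> 0"
    using M N prob_onD(1)[OF M S(1)] prob_onD(1)[OF N S(1)]
    by (intro wdist_leI) (simp add: prob_space.prob_space)
  show "0 \<le> wdist M N" by (rule wdist_nonneg[OF S(1) M N])
qed

text \<open>Clamping f - f x0 to [-c, c], with c a radius of S around x0, changes a 1-Lipschitz f
  only off S and by the constant f x0; bounded test functions are what integration against
  kernels requires.\<close>
lemma wdist_le_if_bounded_lip1:
  fixes S :: "'x::metric_space set"
  assumes S: "compact S" and M: "prob_on S M" and N: "prob_on S N"
    and bound: "\<And>f. f \<in> lip1 \<Longrightarrow> bounded (range f) \<Longrightarrow> \<bar>(\<integral>x. f x \<partial>N) - (\<integral>x. f x \<partial>M)\<bar> \<le> D"
  shows "wdist M N \<le> D"
proof (rule wdist_leI)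
  fix f :: "'x \<Rightarrow> real" assume f: "f \<in> lip1"
  obtain x0 where x0: "x0 \<in> S" using prob_onD(4)[OF M S] by auto
  obtain c where c: "\<And>y. y \<in> S \<Longrightarrow> dist x0 y \<le> c"
    using compact_imp_bounded[OF S] unfolding bounded_any_center[of S x0] by blast
  define g where "g y = max (-c) (min c (f y - f x0))" for y
  have g_lip1: "g \<in> lip1"
  proof -
    have "\<bar>g x - g y\<bar> \<le> \<bar>f x - f y\<bar>" for x y
      unfolding g_def by (simp add: max_def min_def abs_le_iff) linarith
    then show ?thesis using f unfolding lip1_def by (blast intro: order_trans)
  qed
  have "\<bar>g y\<bar> \<le> c" for y using c[OF x0] by (auto simp: g_def abs_le_iff)
  then have g_bounded: "bounded (range g)" by (auto simp: bounded_iff)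
  note g_meas = lip1_borel_measurable[OF g_lip1] lip1_borel_measurable[OF f]
  have "integral\<^sup>L P f = integral\<^sup>L P g + f x0" if P: "prob_on S P" for P
  proof -
    have "f y = g y + f x0" if "y \<in> S" for y
    proof -
      have "\<bar>f y - f x0\<bar> \<le> dist y x0" using f by (simp add: lip1_def)
      also have "\<dots> \<le> c" using c[OF that] by (simp add: dist_commute)
      finally show ?thesis by (auto simp: g_def abs_le_iff)
    qed
    then have "integral\<^sup>L P f = (\<integral>y. g y + f x0 \<partial>P)"
      using g_meas by (intro prob_on_integral_cong[OF S P]) auto
    also have "\<dots> = integral\<^sup>L P g + f x0"
    proof -
      interpret prob_space P using prob_onD(1)[OF P S] .
      have "integrable P g"
        using g_bounded by (intro prob_on_integrable[OF S P g_meas(1)]) (auto intro: bounded_subset)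
      then show ?thesis by (simp add: prob_space)
    qed
    finally show ?thesis .
  qed
  then show "\<bar>(\<integral>x. f x \<partial>N) - (\<integral>x. f x \<partial>M)\<bar> \<le> D"
    using bound[OF g_lip1 g_bounded] M N by simp
qed

lemma abs_integral_diff_le_lipschitz_wdist:
  fixes S :: "'x::metric_space set"
  assumes S: "compact S" and M: "prob_on S M" and N: "prob_on S N"
    and L: "0 < L" "L-lipschitz_on S g" and g: "g \<in> borel_measurable borel"
  shows "\<bar>(\<integral>x. g x \<partial>N) - (\<integral>x. g x \<partial>M)\<bar> \<le> L * wdist M N"
proof -
  define G where "G = lipschitz_envelope L S g"
  have bdd: "bdd_below (g ` S)"
    using compact_lipschitz_on_bounded_image[OF S L(2)] by (rule bounded_imp_bdd_below)
  have G_lip: "L-lipschitz_on UNIV G"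
    unfolding G_def using prob_onD(4)[OF M S] L bdd by (intro lipschitz_on_lipschitz_envelope) auto
  have "(\<lambda>x. (1 / L) * G x) \<in> lip1"
    using lipschitz_on_cmult_real[OF G_lip, of "1 / L"] L by (simp add: lip1_iff_lipschitz_on)
  then have "\<bar>(\<integral>x. (1 / L) * G x \<partial>N) - (\<integral>x. (1 / L) * G x \<partial>M)\<bar> \<le> wdist M N"
    by (rule abs_integral_diff_le_wdist[OF S M N])
  then have "\<bar>(\<integral>x. G x \<partial>N) / L - (\<integral>x. G x \<partial>M) / L\<bar> \<le> wdist M N" by simp
  moreover have "\<bar>(\<integral>x. G x \<partial>N) - (\<integral>x. G x \<partial>M)\<bar> = L * \<bar>(\<integral>x. G x \<partial>N) / L - (\<integral>x. G x \<partial>M) / L\<bar>"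
    using L(1) by (simp add: diff_divide_distrib[symmetric])
  ultimately have G_bound: "\<bar>(\<integral>x. G x \<partial>N) - (\<integral>x. G x \<partial>M)\<bar> \<le> L * wdist M N"
    using L(1) by (simp add: mult_left_mono)
  have "integral\<^sup>L P g = integral\<^sup>L P G" if "prob_on S P" for P
    using g lipschitz_on_UNIV_borel_measurable[OF G_lip] lipschitz_envelope_eq[OF L(2) bdd]
    by (intro prob_on_integral_cong[OF S that]) (auto simp: G_def)
  then show ?thesis using G_bound M N by simp
qed

lemma weak_conv_to_if_wdist_tendsto_0:
  fixes S :: "'x::metric_space set"
  assumes S: "compact S" and \<mu>: "\<And>k. prob_on S (\<mu> k)" and \<nu>: "prob_on S \<nu>"
    and W: "(\<lambda>k. wdist (\<mu> k) \<nu>) \<longlonglongrightarrow> 0"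
  shows "weak_conv_to \<mu> \<nu>"
  unfolding weak_conv_to_def
proof (intro allI impI, elim conjE, rule LIMSEQ_I)
  fix f :: "'x \<Rightarrow> real" and r :: real
  assume f: "continuous_on UNIV f" "bounded (range f)" and r: "0 < r"
  obtain L g where L: "0 < L" and g: "L-lipschitz_on UNIV g"
    and approx: "\<And>x. x \<in> S \<Longrightarrow> \<bar>f x - g x\<bar> \<le> r / 3"
    using compact_continuous_on_lipschitz_approx[OF S prob_onD(4)[OF \<nu> S]
        continuous_on_subset[OF f(1)], of "r / 3"] r
    by auto
  have g_S: "L-lipschitz_on S g" using g by (rule lipschitz_on_subset) simp
  have f_g: "\<bar>(\<integral>x. f x \<partial>P) - (\<integral>x. g x \<partial>P)\<bar> \<le> r / 3" if "prob_on S P" for P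
    using approx borel_measurable_continuous_onI[OF f(1)] lipschitz_on_UNIV_borel_measurable[OF g]
      bounded_subset[OF f(2) image_mono[OF subset_UNIV]]
      compact_lipschitz_on_bounded_image[OF S g_S]
    by (intro prob_on_abs_integral_diff_le[OF S that]) auto
  have "eventually (\<lambda>k. wdist (\<mu> k) \<nu> < r / 3 / L) sequentially"
    using W r L by (intro order_tendstoD(2)) auto
  then obtain N where N: "\<And>k. N \<le> k \<Longrightarrow> L * wdist (\<mu> k) \<nu> < r / 3"
    unfolding eventually_sequentially using L by (metis mult.commute pos_less_divide_eq)
  show "\<exists>N. \<forall>k\<ge>N. norm ((\<integral>x. f x \<partial>\<mu> k) - (\<integral>x. f x \<partial>\<nu>)) < r"
  proof (intro exI allI impI)
    fix k assume "N \<le> k"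
    then have "L * wdist (\<mu> k) \<nu> < r / 3" by (rule N)
    moreover have "\<bar>(\<integral>x. g x \<partial>\<nu>) - (\<integral>x. g x \<partial>\<mu> k)\<bar> \<le> L * wdist (\<mu> k) \<nu>"
      using lipschitz_on_UNIV_borel_measurable[OF g]
      by (intro abs_integral_diff_le_lipschitz_wdist[OF S \<mu> \<nu> L g_S])
    ultimately show "norm ((\<integral>x. f x \<partial>\<mu> k) - (\<integral>x. f x \<partial>\<nu>)) < r"
      using f_g[OF \<mu>[of k]] f_g[OF \<nu>] unfolding real_norm_def abs_le_iff abs_less_iff by linarith
  qed
qed

lemma tendsto_0_if_contraction:
  fixes w :: "nat \<Rightarrow> real"
  assumes "\<And>k. 0 \<le> w k" "\<And>k. w (Suc k) \<le> \<gamma> * w k" "\<gamma> < 1"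
  shows "w \<longlonglongrightarrow> 0"
proof -
  define \<gamma>' where "\<gamma>' = max \<gamma> 0"
  have \<gamma>': "0 \<le> \<gamma>'" "\<gamma>' < 1" using assms(3) by (auto simp: \<gamma>'_def)
  have bound: "w k \<le> \<gamma>' ^ k * w 0" for k
  proof (induction k)
    case (Suc k)
    have "w (Suc k) \<le> \<gamma>' * w k"
      using assms(2)[of k] mult_right_mono[OF max.cobounded1[of \<gamma> 0] assms(1)[of k]]
      unfolding \<gamma>'_def by linarith
    also have "\<dots> \<le> \<gamma>' * (\<gamma>' ^ k * w 0)" using Suc \<gamma>'(1) by (rule mult_left_mono)
    finally show ?case by simp
  qed simp
  have "\<forall>k. norm (w k) \<le> \<gamma>' ^ k * w 0" using bound assms(1) by simp
  moreover have "(\<lambda>k. \<gamma>' ^ k * w 0) \<longlonglongrightarrow> 0"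
    using \<gamma>' by (intro tendsto_mult_left_zero[OF LIMSEQ_power_zero]) simp
  ultimately show ?thesis by (rule Lim_null_comparison[OF always_eventually])
qed

locale transition_model =
  fixes S :: "'s::euclidean_space set"
    and A :: "'a::euclidean_space set"
    and PZ :: "'z measure"
    and T :: "'s \<Rightarrow> 'a \<Rightarrow> 's measure \<Rightarrow> 'z \<Rightarrow> 's"
    and Q :: "'s \<Rightarrow> 'a measure"
  assumes S_compact: "compact S"
    and A_compact: "compact A"
    and PZ: "prob_space PZ"
    and T_meas: "\<And>\<nu>. prob_on S \<nu> \<Longrightarrow>
        (\<lambda>(x, a, z). T x a \<nu> z) \<in> borel_measurable (borel \<Otimes>\<^sub>M (borel \<Otimes>\<^sub>M PZ))"
    and T_range: "\<And>\<nu> x a z. prob_on S \<nu> \<Longrightarrow> x \<in> S \<Longrightarrow> a \<in> A \<Longrightarrow> z \<in> space PZ \<Longrightarrow>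
        T x a \<nu> z \<in> S"
    and Q_prob: "\<And>x. prob_space (Q x) \<and> sets (Q x) = sets borel"
    and Q_A: "\<And>x. x \<in> S \<Longrightarrow> emeasure (Q x) A = 1"
    and Q_meas: "\<And>B. B \<in> sets borel \<Longrightarrow> (\<lambda>x. emeasure (Q x) B) \<in> borel_measurable borel"
begin

text \<open>kernel \<nu> x is the paper's P^Q(\<cdot>|x) with the mean field frozen at \<nu>; the recursion of
  the theorem reads \<mu> (Suc k) = transition (\<mu> k), and next_expectation \<nu> f is the function G \<nu>
  of the proof idea.\<close>
definition kernel :: "'s measure \<Rightarrow> 's \<Rightarrow> 's measure" where
  "kernel \<nu> x = Q x \<bind> (\<lambda>a. distr PZ borel (T x a \<nu>))"

definition transition :: "'s measure \<Rightarrow> 's measure" where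
  "transition \<nu> = \<nu> \<bind> kernel \<nu>"

definition action_expectation :: "'s measure \<Rightarrow> ('s \<Rightarrow> real) \<Rightarrow> 's \<Rightarrow> 'a \<Rightarrow> real" where
  "action_expectation \<nu> f x a = (\<integral>z. f (T x a \<nu> z) \<partial>PZ)"

definition next_expectation :: "'s measure \<Rightarrow> ('s \<Rightarrow> real) \<Rightarrow> 's \<Rightarrow> real" where
  "next_expectation \<nu> f x = (\<integral>a. action_expectation \<nu> f x a \<partial>Q x)"

lemma prob_on_Q: "x \<in> S \<Longrightarrow> prob_on A (Q x)"
  using Q_prob Q_A by (simp add: prob_on_def)

lemma measurable_T:
  assumes "prob_on S \<nu>"
  shows "T x a \<nu> \<in> PZ \<rightarrow>\<^sub>M borel"
proof -
  have "(\<lambda>z. (x, a, z)) \<in> PZ \<rightarrow>\<^sub>M borel \<Otimes>\<^sub>M (borel \<Otimes>\<^sub>M PZ)" by measurable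
  from measurable_compose[OF this T_meas[OF assms]] show ?thesis by simp
qed

lemma measurable_distr_T:
  assumes "prob_on S \<nu>"
  shows "(\<lambda>p. distr PZ borel (T (fst p) (snd p) \<nu>)) \<in> borel \<Otimes>\<^sub>M borel \<rightarrow>\<^sub>M subprob_algebra borel"
proof -
  have "(\<lambda>w. (fst (fst w), snd (fst w), snd w))
      \<in> (borel \<Otimes>\<^sub>M borel) \<Otimes>\<^sub>M PZ \<rightarrow>\<^sub>M borel \<Otimes>\<^sub>M (borel \<Otimes>\<^sub>M PZ)"
    by measurable
  from measurable_compose[OF this T_meas[OF assms]]
  have "(\<lambda>(p, z). T (fst p) (snd p) \<nu> z) \<in> (borel \<Otimes>\<^sub>M borel) \<Otimes>\<^sub>M PZ \<rightarrow>\<^sub>M borel"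
    by (simp add: case_prod_beta')
  moreover have "(\<lambda>_. PZ) \<in> borel \<Otimes>\<^sub>M borel \<rightarrow>\<^sub>M subprob_algebra PZ"
    by (rule measurable_const) (simp add: space_subprob_algebra PZ prob_space_imp_subprob_space)
  ultimately show ?thesis by (rule measurable_distr2)
qed

lemma measurable_distr_T_action:
  assumes "prob_on S \<nu>" "sets M = sets borel"
  shows "(\<lambda>a. distr PZ borel (T x a \<nu>)) \<in> M \<rightarrow>\<^sub>M subprob_algebra borel"
proof -
  have "(\<lambda>a. (x, a)) \<in> borel \<rightarrow>\<^sub>M borel \<Otimes>\<^sub>M borel" by measurable
  from measurable_compose[OF this measurable_distr_T[OF assms(1)]]
  show ?thesis by (subst measurable_cong_sets[OF assms(2) refl]) simp
qed

lemma measurable_kernel: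
  assumes "prob_on S \<nu>" "sets M = sets borel"
  shows "kernel \<nu> \<in> M \<rightarrow>\<^sub>M subprob_algebra borel"
proof -
  have "Q \<in> borel \<rightarrow>\<^sub>M subprob_algebra borel"
    by (rule measurable_subprob_algebra) (auto simp: Q_prob prob_space_imp_subprob_space Q_meas)
  then have "(\<lambda>x. Q x \<bind> (\<lambda>a. distr PZ borel (T x a \<nu>))) \<in> borel \<rightarrow>\<^sub>M subprob_algebra borel"
    by (rule measurable_bind) (use measurable_distr_T[OF assms(1)] in simp)
  then show ?thesis
    unfolding kernel_def[abs_def] by (subst measurable_cong_sets[OF assms(2) refl]) simp
qed

lemma sets_transition: "prob_on S \<nu> \<Longrightarrow> sets (transition \<nu>) = sets borel"
  unfolding transition_def
  by (intro sets_bind_measurable[OF measurable_kernel] prob_on_space_nonempty)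
    (auto simp: prob_on_def)

lemma emeasure_transition:
  assumes \<nu>: "prob_on S \<nu>" and B: "B \<in> sets borel"
  shows "emeasure (transition \<nu>) B =
    (\<integral>\<^sup>+ x. (\<integral>\<^sup>+ a. emeasure PZ {z \<in> space PZ. T x a \<nu> z \<in> B} \<partial>Q x) \<partial>\<nu>)"
proof -
  have "emeasure (transition \<nu>) B = (\<integral>\<^sup>+ x. emeasure (kernel \<nu> x) B \<partial>\<nu>)"
    unfolding transition_def using \<nu>
    by (intro emeasure_bind[OF _ measurable_kernel[OF \<nu>] B] prob_on_space_nonempty)
      (auto simp: prob_on_def)
  also have "\<dots> = (\<integral>\<^sup>+ x. (\<integral>\<^sup>+ a. emeasure PZ {z \<in> space PZ. T x a \<nu> z \<in> B} \<partial>Q x) \<partial>\<nu>)"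
  proof (rule nn_integral_cong)
    fix x
    have "emeasure (kernel \<nu> x) B = (\<integral>\<^sup>+ a. emeasure (distr PZ borel (T x a \<nu>)) B \<partial>Q x)"
      unfolding kernel_def using Q_prob[of x] prob_space.not_empty
      by (intro emeasure_bind[OF _ measurable_distr_T_action[OF \<nu>] B]) auto
    also have "\<dots> = (\<integral>\<^sup>+ a. emeasure PZ {z \<in> space PZ. T x a \<nu> z \<in> B} \<partial>Q x)"
      using measurable_T[OF \<nu>] B by (simp add: emeasure_distr vimage_def Int_def conj_commute)
    finally show "emeasure (kernel \<nu> x) B = \<dots>" .
  qed
  finally show ?thesis .
qed

lemma transition_eqI:
  assumes \<nu>: "prob_on S \<nu>" and M: "sets M = sets borel"
    and eq: "\<And>B. B \<in> sets borel \<Longrightarrow> emeasure M B =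
      (\<integral>\<^sup>+ x. (\<integral>\<^sup>+ a. emeasure PZ {z \<in> space PZ. T x a \<nu> z \<in> B} \<partial>Q x) \<partial>\<nu>)"
  shows "M = transition \<nu>"
  using M sets_transition[OF \<nu>] eq emeasure_transition[OF \<nu>] by (intro measure_eqI) auto

lemma prob_on_transition:
  assumes \<nu>: "prob_on S \<nu>"
  shows "prob_on S (transition \<nu>)"
proof -
  interpret prob_space \<nu> using prob_onD(1)[OF \<nu> S_compact] .
  have full: "emeasure (transition \<nu>) B = 1" if B: "B \<in> sets borel" "S \<subseteq> B" for B
  proof -
    have "(\<integral>\<^sup>+ a. emeasure PZ {z \<in> space PZ. T x a \<nu> z \<in> B} \<partial>Q x) = 1" if x: "x \<in> S" for x
    proof -
      interpret Qx: prob_space "Q x" using Q_prob by simp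
      have "AE a in Q x. emeasure PZ {z \<in> space PZ. T x a \<nu> z \<in> B} = 1"
        using prob_onD(3)[OF prob_on_Q[OF x] A_compact]
      proof eventually_elim
        case (elim a)
        then have "{z \<in> space PZ. T x a \<nu> z \<in> B} = space PZ" using T_range[OF \<nu> x] B(2) by auto
        then show ?case using prob_space.emeasure_space_1[OF PZ] by simp
      qed
      then have "(\<integral>\<^sup>+ a. emeasure PZ {z \<in> space PZ. T x a \<nu> z \<in> B} \<partial>Q x) = (\<integral>\<^sup>+ a. 1 \<partial>Q x)"
        by (rule nn_integral_cong_AE)
      then show ?thesis using Qx.emeasure_space_1 by simp
    qed
    with prob_onD(3)[OF \<nu> S_compact]
    have "AE x in \<nu>. (\<integral>\<^sup>+ a. emeasure PZ {z \<in> space PZ. T x a \<nu> z \<in> B} \<partial>Q x) = 1" by auto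
    then have "emeasure (transition \<nu>) B = (\<integral>\<^sup>+ x. 1 \<partial>\<nu>)"
      unfolding emeasure_transition[OF \<nu> B(1)] by (rule nn_integral_cong_AE)
    then show ?thesis using emeasure_space_1 by simp
  qed
  have "space (transition \<nu>) = UNIV" using sets_eq_imp_space_eq[OF sets_transition[OF \<nu>]] by simp
  then have "prob_space (transition \<nu>)" using full[of UNIV] by (intro prob_spaceI) auto
  then show ?thesis using sets_transition[OF \<nu>] full[of S] S_compact
    by (auto simp: prob_on_def intro: borel_closed compact_imp_closed)
qed

lemma borel_measurable_action_expectation:
  assumes "prob_on S \<nu>" "f \<in> borel_measurable borel" "sets M = sets borel"
  shows "action_expectation \<nu> f x \<in> borel_measurable M"
proof -
  have "(\<lambda>a. integral\<^sup>L (distr PZ borel (T x a \<nu>)) f) \<in> borel_measurable M"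
    using measurable_compose[OF measurable_distr_T_action[OF assms(1,3)]
        integral_measurable_subprob_algebra[OF assms(2)]] by simp
  then show ?thesis
    unfolding action_expectation_def[abs_def]
    by (simp add: integral_distr[OF measurable_T[OF assms(1)] assms(2)])
qed

lemma abs_action_expectation_le:
  assumes "prob_on S \<nu>" "f \<in> borel_measurable borel" "\<And>y. \<bar>f y\<bar> \<le> c"
  shows "\<bar>action_expectation \<nu> f x a\<bar> \<le> c"
  unfolding action_expectation_def using assms(3)
  by (intro prob_space_abs_integral_le[OF PZ]
      measurable_compose[OF measurable_T[OF assms(1)] assms(2)]) auto

lemma integral_kernel:
  assumes \<nu>: "prob_on S \<nu>" and f: "f \<in> borel_measurable borel" "\<And>y. \<bar>f y\<bar> \<le> c"
  shows "integral\<^sup>L (kernel \<nu> x) f = next_expectation \<nu> f x"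
proof -
  interpret Qx: prob_space "Q x" using Q_prob by simp
  have D: "(\<lambda>a. distr PZ borel (T x a \<nu>)) \<in> Q x \<rightarrow>\<^sub>M subprob_algebra borel"
    using Q_prob by (intro measurable_distr_T_action[OF \<nu>]) simp
  have "integral\<^sup>L (kernel \<nu> x) f = (\<integral>a. integral\<^sup>L (distr PZ borel (T x a \<nu>)) f \<partial>Q x)"
    unfolding kernel_def
    using f subprob_space.emeasure_space_le_1[OF subprob_space_kernel[OF D]]
    by (intro integral_bind[OF f(1) _ D Qx.finite_measure_axioms, where B'=1]) auto
  then show ?thesis
    by (simp add: next_expectation_def action_expectation_def
        integral_distr[OF measurable_T[OF \<nu>] f(1)])
qed

lemma integral_transition:
  assumes \<nu>: "prob_on S \<nu>" and f: "f \<in> borel_measurable borel" "\<And>y. \<bar>f y\<bar> \<le> c"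
  shows "integral\<^sup>L (transition \<nu>) f = (\<integral>x. next_expectation \<nu> f x \<partial>\<nu>)"
proof -
  interpret prob_space \<nu> using prob_onD(1)[OF \<nu> S_compact] .
  have K: "kernel \<nu> \<in> \<nu> \<rightarrow>\<^sub>M subprob_algebra borel"
    using \<nu> by (intro measurable_kernel) (auto simp: prob_on_def)
  have "integral\<^sup>L (transition \<nu>) f = (\<integral>x. integral\<^sup>L (kernel \<nu> x) f \<partial>\<nu>)"
    unfolding transition_def
    using f subprob_space.emeasure_space_le_1[OF subprob_space_kernel[OF K]]
    by (intro integral_bind[OF f(1) _ K finite_measure_axioms, where B'=1]) auto
  then show ?thesis using integral_kernel[OF \<nu> f] by simp
qed

lemma borel_measurable_next_expectation:
  assumes \<nu>: "prob_on S \<nu>" and f: "f \<in> borel_measurable borel" "\<And>y. \<bar>f y\<bar> \<le> c"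
  shows "next_expectation \<nu> f \<in> borel_measurable borel"
  using measurable_compose[OF measurable_kernel[OF \<nu> refl]
      integral_measurable_subprob_algebra[OF f(1)]]
  by (simp add: integral_kernel[OF \<nu> f] o_def)

lemma abs_next_expectation_le:
  assumes "prob_on S \<nu>" "f \<in> borel_measurable borel" "\<And>y. \<bar>f y\<bar> \<le> c"
  shows "\<bar>next_expectation \<nu> f x\<bar> \<le> c"
  unfolding next_expectation_def using Q_prob assms abs_action_expectation_le
  by (intro prob_space_abs_integral_le borel_measurable_action_expectation) auto

lemma abs_action_expectation_diff_le:
  assumes \<nu>: "prob_on S \<nu>" "prob_on S \<nu>'" and f: "f \<in> lip1" "\<And>y. \<bar>f y\<bar> \<le> c"
    and close: "\<And>z. z \<in> space PZ \<Longrightarrow> dist (T x a \<nu> z) (T x' a' \<nu>' z) \<le> C"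
  shows "\<bar>action_expectation \<nu> f x a - action_expectation \<nu>' f x' a'\<bar> \<le> C"
  unfolding action_expectation_def
proof (rule prob_space_abs_integral_diff_le[OF PZ])
  note f_meas = lip1_borel_measurable[OF f(1)]
  show "integrable PZ (\<lambda>z. f (T x a \<nu> z))" "integrable PZ (\<lambda>z. f (T x' a' \<nu>' z))"
    using f(2) PZ
    by (auto intro!: finite_measure.integrable_const_bound[where B=c]
        measurable_compose[OF measurable_T f_meas] \<nu>
        simp: prob_space_def)
  show "AE z in PZ. \<bar>f (T x a \<nu> z) - f (T x' a' \<nu>' z)\<bar> \<le> C"
  proof (rule AE_I2)
    fix z assume "z \<in> space PZ"
    then show "\<bar>f (T x a \<nu> z) - f (T x' a' \<nu>' z)\<bar> \<le> C"
      using f(1) close unfolding lip1_def by (blast intro: order_trans)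
  qed
qed

end

locale stationary_model = transition_model S A PZ T Q
  for S :: "'s::euclidean_space set"
    and A :: "'a::euclidean_space set"
    and PZ :: "'z measure"
    and T :: "'s \<Rightarrow> 'a \<Rightarrow> 's measure \<Rightarrow> 'z \<Rightarrow> 's"
    and Q :: "'s \<Rightarrow> 'a measure" +
  fixes \<mu>s :: "'s measure"
    and \<gamma>W \<gamma>Q \<gamma>A \<gamma>S :: real
  assumes mus: "prob_on S \<mu>s"
    and stationary: "\<And>B. B \<in> sets borel \<Longrightarrow>
        emeasure \<mu>s B = (\<integral>\<^sup>+ x. (\<integral>\<^sup>+ a. emeasure PZ {z \<in> space PZ. T x a \<mu>s z \<in> B} \<partial>Q x) \<partial>\<mu>s)"
    and T1: "\<And>\<nu> x a z. prob_on S \<nu> \<Longrightarrow> x \<in> S \<Longrightarrow> a \<in> A \<Longrightarrow> z \<in> space PZ \<Longrightarrow>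
        dist (T x a \<nu> z) (T x a \<mu>s z) \<le> \<gamma>W * wdist \<nu> \<mu>s"
    and T2: "\<And>x x'. x \<in> S \<Longrightarrow> x' \<in> S \<Longrightarrow> wdist (Q x) (Q x') \<le> \<gamma>Q * dist x x'"
    and T3: "\<gamma>A > 0" "\<And>x a a' z. x \<in> S \<Longrightarrow> a \<in> A \<Longrightarrow> a' \<in> A \<Longrightarrow> z \<in> space PZ \<Longrightarrow>
        dist (T x a \<mu>s z) (T x a' \<mu>s z) \<le> \<gamma>A * dist a a'"
    and T4: "\<gamma>S > 0" "\<And>x x' a z. x \<in> S \<Longrightarrow> x' \<in> S \<Longrightarrow> a \<in> A \<Longrightarrow> z \<in> space PZ \<Longrightarrow>
        dist (T x a \<mu>s z) (T x' a \<mu>s z) \<le> \<gamma>S * dist x x'"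
begin

lemma transition_stationary: "transition \<mu>s = \<mu>s"
  using transition_eqI[OF mus prob_onD(2)[OF mus S_compact] stationary] by simp

lemma abs_next_expectation_measure_diff_le:
  assumes \<nu>: "prob_on S \<nu>" and f: "f \<in> lip1" "\<And>y. \<bar>f y\<bar> \<le> c" and x: "x \<in> S"
  shows "\<bar>next_expectation \<nu> f x - next_expectation \<mu>s f x\<bar> \<le> \<gamma>W * wdist \<nu> \<mu>s"
  unfolding next_expectation_def
proof (rule prob_on_abs_integral_diff_le[OF A_compact prob_on_Q[OF x]])
  note f_meas = lip1_borel_measurable[OF f(1)]
  show "action_expectation \<nu> f x \<in> borel_measurable borel"
    "action_expectation \<mu>s f x \<in> borel_measurable borel"
    using \<nu> mus f_meas by (auto intro: borel_measurable_action_expectation)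
  show "bounded (action_expectation \<nu> f x ` A)" "bounded (action_expectation \<mu>s f x ` A)"
    using \<nu> mus f_meas f(2) by (auto intro!: bounded_image_if_abs_le abs_action_expectation_le)
  show "\<bar>action_expectation \<nu> f x a - action_expectation \<mu>s f x a\<bar> \<le> \<gamma>W * wdist \<nu> \<mu>s"
    if "a \<in> A" for a
    using T1[OF \<nu> x that] by (intro abs_action_expectation_diff_le[OF \<nu> mus f])
qed

lemma lipschitz_on_next_expectation:
  assumes \<gamma>Q: "0 \<le> \<gamma>Q" and f: "f \<in> lip1" "\<And>y. \<bar>f y\<bar> \<le> c"
  shows "(\<gamma>Q * \<gamma>A + \<gamma>S)-lipschitz_on S (next_expectation \<mu>s f)"
proof (rule lipschitz_onI)
  show "0 \<le> \<gamma>Q * \<gamma>A + \<gamma>S" using \<gamma>Q T3(1) T4(1) by simp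
  fix x x' assume x: "x \<in> S" and x': "x' \<in> S"
  note f_meas = lip1_borel_measurable[OF f(1)]
  have H_meas: "action_expectation \<mu>s f y \<in> borel_measurable borel" for y
    using mus f_meas by (rule borel_measurable_action_expectation) simp
  have H_bounded: "bounded (action_expectation \<mu>s f y ` A)" for y
    using mus f_meas f(2) by (intro bounded_image_if_abs_le abs_action_expectation_le)
  have "\<gamma>A-lipschitz_on A (action_expectation \<mu>s f x)"
  proof (rule lipschitz_onI)
    fix a a' assume "a \<in> A" "a' \<in> A"
    then show "dist (action_expectation \<mu>s f x a) (action_expectation \<mu>s f x a') \<le> \<gamma>A * dist a a'"
      unfolding dist_real_def using T3(2)[OF x]
      by (intro abs_action_expectation_diff_le[OF mus mus f])
  qed (use T3(1) in simp)
  then have "\<bar>(\<integral>a. action_expectation \<mu>s f x a \<partial>Q x) - (\<integral>a. action_expectation \<mu>s f x a \<partial>Q x')\<bar>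
      \<le> \<gamma>A * wdist (Q x') (Q x)"
    by (intro abs_integral_diff_le_lipschitz_wdist[OF A_compact prob_on_Q[OF x'] prob_on_Q[OF x] T3(1)]
        H_meas)
  also have "\<dots> \<le> \<gamma>A * (\<gamma>Q * dist x x')"
    using T2[OF x' x] T3(1) by (simp add: dist_commute)
  finally have policy_shift:
      "\<bar>(\<integral>a. action_expectation \<mu>s f x a \<partial>Q x) - (\<integral>a. action_expectation \<mu>s f x a \<partial>Q x')\<bar>
      \<le> \<gamma>Q * \<gamma>A * dist x x'" by (simp add: algebra_simps)
  have state_shift:
      "\<bar>(\<integral>a. action_expectation \<mu>s f x a \<partial>Q x') - (\<integral>a. action_expectation \<mu>s f x' a \<partial>Q x')\<bar>
      \<le> \<gamma>S * dist x x'"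
    using T4(2)[OF x x'] H_meas H_bounded
    by (intro prob_on_abs_integral_diff_le[OF A_compact prob_on_Q[OF x']]
        abs_action_expectation_diff_le[OF mus mus f])
  show "dist (next_expectation \<mu>s f x) (next_expectation \<mu>s f x') \<le> (\<gamma>Q * \<gamma>A + \<gamma>S) * dist x x'"
    using policy_shift state_shift unfolding next_expectation_def dist_real_def
    by (simp add: algebra_simps abs_le_iff)
qed

lemma wdist_transition_le_if_\<gamma>Q_nonneg:
  assumes \<nu>: "prob_on S \<nu>" and \<gamma>Q: "0 \<le> \<gamma>Q"
  shows "wdist (transition \<nu>) \<mu>s \<le> (\<gamma>W + \<gamma>Q * \<gamma>A + \<gamma>S) * wdist \<nu> \<mu>s"
proof (rule wdist_le_if_bounded_lip1[OF S_compact prob_on_transition[OF \<nu>] mus])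
  fix f :: "'s \<Rightarrow> real" assume f: "f \<in> lip1" "bounded (range f)"
  then obtain c where c: "\<And>y. \<bar>f y\<bar> \<le> c" by (auto simp: bounded_iff)
  note f_meas = lip1_borel_measurable[OF f(1)]
  define W where "W = wdist \<nu> \<mu>s"
  define L where "L = \<gamma>Q * \<gamma>A + \<gamma>S"
  have L: "0 < L" using \<gamma>Q T3(1) T4(1) by (simp add: L_def add_nonneg_pos)
  have G_meas: "next_expectation \<nu>' f \<in> borel_measurable borel" if "prob_on S \<nu>'" for \<nu>'
    using that f_meas c by (rule borel_measurable_next_expectation)
  have G_bounded: "bounded (next_expectation \<nu>' f ` S)" if "prob_on S \<nu>'" for \<nu>'
    using that f_meas c by (intro bounded_image_if_abs_le abs_next_expectation_le)
  have "\<bar>(\<integral>x. next_expectation \<mu>s f x \<partial>\<mu>s) - (\<integral>x. next_expectation \<mu>s f x \<partial>\<nu>)\<bar> \<le> L * W"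
    unfolding W_def L_def using L lipschitz_on_next_expectation[OF \<gamma>Q f(1) c] G_meas[OF mus]
    by (intro abs_integral_diff_le_lipschitz_wdist[OF S_compact \<nu> mus]) (simp_all add: L_def)
  moreover have "\<bar>(\<integral>x. next_expectation \<mu>s f x \<partial>\<nu>) - (\<integral>x. next_expectation \<nu> f x \<partial>\<nu>)\<bar> \<le> \<gamma>W * W"
    unfolding W_def using G_meas G_bounded abs_next_expectation_measure_diff_le[OF \<nu> f(1) c] \<nu> mus
    by (intro prob_on_abs_integral_diff_le[OF S_compact \<nu>]) (auto simp: abs_minus_commute)
  moreover have "integral\<^sup>L \<mu>s f = (\<integral>x. next_expectation \<mu>s f x \<partial>\<mu>s)"
    using integral_transition[OF mus f_meas c] by (simp add: transition_stationary)
  moreover have "integral\<^sup>L (transition \<nu>) f = (\<integral>x. next_expectation \<nu> f x \<partial>\<nu>)"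
    by (rule integral_transition[OF \<nu> f_meas c])
  ultimately show "\<bar>(\<integral>x. f x \<partial>\<mu>s) - (\<integral>x. f x \<partial>transition \<nu>)\<bar> \<le> (\<gamma>W + \<gamma>Q * \<gamma>A + \<gamma>S) * wdist \<nu> \<mu>s"
    unfolding W_def L_def by (simp add: abs_le_iff algebra_simps)
qed

lemma wdist_transition_le:
  assumes \<nu>: "prob_on S \<nu>"
  shows "wdist (transition \<nu>) \<mu>s \<le> (\<gamma>W + \<gamma>Q * \<gamma>A + \<gamma>S) * wdist \<nu> \<mu>s"
proof (cases "\<exists>x\<in>S. \<exists>x'\<in>S. x \<noteq> x'")
  case True
  then obtain x x' where x: "x \<in> S" "x' \<in> S" "x \<noteq> x'" by blast
  have "0 \<le> \<gamma>Q * dist x x'"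
    using wdist_nonneg[OF A_compact prob_on_Q[OF x(1)] prob_on_Q[OF x(2)]] T2[OF x(1,2)] by linarith
  then have "0 \<le> \<gamma>Q" using x(3) by (simp add: zero_le_mult_iff)
  then show ?thesis by (rule wdist_transition_le_if_\<gamma>Q_nonneg[OF \<nu>])
next
  case False
  then obtain x0 where "S \<subseteq> {x0}" using prob_onD(4)[OF mus S_compact] by blast
  then show ?thesis
    using wdist_eq_0_if_subsingleton[OF S_compact] \<nu> mus prob_on_transition[OF \<nu>] by simp
qed

end

theorem mainTheorem12:
  fixes S :: "'s::euclidean_space set"
    and A :: "'a::euclidean_space set"
    and PZ :: "'z measure"
    and T :: "'s \<Rightarrow> 'a \<Rightarrow> 's measure \<Rightarrow> 'z \<Rightarrow> 's"
    and Q :: "'s \<Rightarrow> 'a measure"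
    and \<mu>s :: "'s measure"
    and \<mu> :: "nat \<Rightarrow> 's measure"
    and \<gamma>W \<gamma>Q \<gamma>A \<gamma>S :: real
  assumes S_compact: "compact S"
    and A_compact: "compact A"
    and PZ: "prob_space PZ"
    and T_meas: "\<And>\<nu>. prob_on S \<nu> \<Longrightarrow>
        (\<lambda>(x, a, z). T x a \<nu> z) \<in> borel_measurable (borel \<Otimes>\<^sub>M (borel \<Otimes>\<^sub>M PZ))"
    and T_range: "\<And>\<nu> x a z. prob_on S \<nu> \<Longrightarrow> x \<in> S \<Longrightarrow> a \<in> A \<Longrightarrow> z \<in> space PZ \<Longrightarrow>
        T x a \<nu> z \<in> S"
    and Q_prob: "\<And>x. prob_space (Q x) \<and> sets (Q x) = sets borel"
    and Q_A: "\<And>x. x \<in> S \<Longrightarrow> emeasure (Q x) A = 1"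
    and Q_meas: "\<And>B. B \<in> sets borel \<Longrightarrow> (\<lambda>x. emeasure (Q x) B) \<in> borel_measurable borel"
    and mus: "prob_on S \<mu>s"
    and stationary: "\<And>B. B \<in> sets borel \<Longrightarrow>
        emeasure \<mu>s B = (\<integral>\<^sup>+ x. (\<integral>\<^sup>+ a. emeasure PZ {z \<in> space PZ. T x a \<mu>s z \<in> B} \<partial>Q x) \<partial>\<mu>s)"
    and T1: "\<gamma>W > 0" "\<And>\<nu> x a z. prob_on S \<nu> \<Longrightarrow> x \<in> S \<Longrightarrow> a \<in> A \<Longrightarrow> z \<in> space PZ \<Longrightarrow>
        dist (T x a \<nu> z) (T x a \<mu>s z) \<le> \<gamma>W * wdist \<nu> \<mu>s"
    and T2: "\<And>x x'. x \<in> S \<Longrightarrow> x' \<in> S \<Longrightarrow> wdist (Q x) (Q x') \<le> \<gamma>Q * dist x x'"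
    and T3: "\<gamma>A > 0" "\<And>x a a' z. x \<in> S \<Longrightarrow> a \<in> A \<Longrightarrow> a' \<in> A \<Longrightarrow> z \<in> space PZ \<Longrightarrow>
        dist (T x a \<mu>s z) (T x a' \<mu>s z) \<le> \<gamma>A * dist a a'"
    and T4: "\<gamma>S > 0" "\<And>x x' a z. x \<in> S \<Longrightarrow> x' \<in> S \<Longrightarrow> a \<in> A \<Longrightarrow> z \<in> space PZ \<Longrightarrow>
        dist (T x a \<mu>s z) (T x' a \<mu>s z) \<le> \<gamma>S * dist x x'"
    and T5: "\<gamma>W + \<gamma>Q * \<gamma>A + \<gamma>S < 1"
    and mu0: "prob_on S (\<mu> 0)"
    and mu_sets: "\<And>k. sets (\<mu> (Suc k)) = sets borel"
    and mu_rec: "\<And>k B. B \<in> sets borel \<Longrightarrow>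
        emeasure (\<mu> (Suc k)) B =
          (\<integral>\<^sup>+ x. (\<integral>\<^sup>+ a. emeasure PZ {z \<in> space PZ. T x a (\<mu> k) z \<in> B} \<partial>Q x) \<partial>\<mu> k)"
  shows "(\<forall>k. wdist (\<mu> (Suc k)) \<mu>s \<le> (\<gamma>W + \<gamma>Q * \<gamma>A + \<gamma>S) * wdist (\<mu> k) \<mu>s)
         \<and> weak_conv_to \<mu> \<mu>s"
proof -
  interpret stationary_model S A PZ T Q \<mu>s \<gamma>W \<gamma>Q \<gamma>A \<gamma>S
    by (intro stationary_model.intro transition_model.intro stationary_model_axioms.intro) (fact assms)+
  have \<mu>_transition: "\<mu> (Suc k) = transition (\<mu> k)" if "prob_on S (\<mu> k)" for k
    by (rule transition_eqI[OF that mu_sets mu_rec])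
  have \<mu>_prob: "prob_on S (\<mu> k)" for k
    by (induction k) (simp_all add: mu0 \<mu>_transition prob_on_transition)
  have contraction: "wdist (\<mu> (Suc k)) \<mu>s \<le> (\<gamma>W + \<gamma>Q * \<gamma>A + \<gamma>S) * wdist (\<mu> k) \<mu>s" for k
    using wdist_transition_le[OF \<mu>_prob] \<mu>_transition[OF \<mu>_prob] by simp
  have "(\<lambda>k. wdist (\<mu> k) \<mu>s) \<longlonglongrightarrow> 0"
    using wdist_nonneg[OF S_compact \<mu>_prob mus] contraction T5 by (rule tendsto_0_if_contraction)
  then have "weak_conv_to \<mu> \<mu>s"
    by (rule weak_conv_to_if_wdist_tendsto_0[OF S_compact \<mu>_prob mus])
  with contraction show ?thesis by blast
qed

end
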